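(* Let $X$ and $Y$ be Hausdorff compact spaces, $\pi: X \to Y$ a fully closed continuous surjection, $y \in Y$, and $f$ a real-valued continuous function on $\pi^{-1}(y)$. Then there exists a continuous function $\tilde f: X \to \mathbb{R}$ extending $f$ such that the oscillation of $\tilde f$ on $\pi^{-1}(y')$ is $0$ (i.e. $\tilde f$ is constant on $\pi^{-1}(y')$) for every $y' \in Y$ with $y' \neq y$.
   Context: A continuous surjection $\pi: X \to Y$ between Hausdorff compacta is fully closed if for any two closed disjoint subsets $F_1, F_2 \subset X$ the set $\pi(F_1)\cap\pi(F_2)$ is finite. *)

theory Defs
  imports "HOL-Analysis.Analysis"
begin

definition fully_closed :: "'a topology \<Rightarrow> 'b topology \<Rightarrow> ('a \<Rightarrow> 'b) \<Rightarrow> bool" where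
  "fully_closed X Y \<pi> \<longleftrightarrow>
     continuous_map X Y \<pi> \<and> \<pi> ` topspace X = topspace Y \<and>
     (\<forall>F1 F2. closedin X F1 \<longrightarrow> closedin X F2 \<longrightarrow> F1 \<inter> F2 = {} \<longrightarrow>
        finite (\<pi> ` F1 \<inter> \<pi> ` F2))"

end

theory Submission
  imports Defs
begin

(* Collapse each fibre pi^-1(y') with y' \<noteq> y to a point and leave pi^-1(y) untouched.
   Full closedness makes this quotient map closed: if x in pi^-1(y) lies outside a closed set C,
   a neighbourhood U of x whose closure misses C meets only finitely many fibres that also meet C,
   and removing these closed fibres from U leaves a neighbourhood of x missing the saturation of C.
   So the quotient of the normal space X is normal and contains pi^-1(y) as a closed copy; the
   Tietze extension of f from that copy, composed with the quotient map, is the required function. *)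

definition quotient_topology :: "'a topology \<Rightarrow> ('a \<Rightarrow> 'b) \<Rightarrow> 'b topology" where
  "quotient_topology X q =
     topology (\<lambda>U. U \<subseteq> q ` topspace X \<and> openin X {x \<in> topspace X. q x \<in> U})"

lemma openin_quotient_topology:
  "openin (quotient_topology X q) U \<longleftrightarrow> U \<subseteq> q ` topspace X \<and> openin X {x \<in> topspace X. q x \<in> U}"
proof -
  have "istopology (\<lambda>U. U \<subseteq> q ` topspace X \<and> openin X {x \<in> topspace X. q x \<in> U})"
  proof (unfold istopology_def, intro conjI allI impI)
    fix S T
    assume "S \<subseteq> q ` topspace X \<and> openin X {x \<in> topspace X. q x \<in> S}"
      and "T \<subseteq> q ` topspace X \<and> openin X {x \<in> topspace X. q x \<in> T}"
    moreover have "{x \<in> topspace X. q x \<in> S \<inter> T} =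
        {x \<in> topspace X. q x \<in> S} \<inter> {x \<in> topspace X. q x \<in> T}" by auto
    ultimately show "S \<inter> T \<subseteq> q ` topspace X" "openin X {x \<in> topspace X. q x \<in> S \<inter> T}"
      by auto
  next
    fix \<K>
    assume "\<forall>S\<in>\<K>. S \<subseteq> q ` topspace X \<and> openin X {x \<in> topspace X. q x \<in> S}"
    moreover have "{x \<in> topspace X. q x \<in> \<Union>\<K>} = (\<Union>S\<in>\<K>. {x \<in> topspace X. q x \<in> S})"
      by auto
    ultimately show "\<Union>\<K> \<subseteq> q ` topspace X" "openin X {x \<in> topspace X. q x \<in> \<Union>\<K>}"
      by auto
  qed
  then show ?thesis
    by (simp add: quotient_topology_def)
qed

lemma topspace_quotient_topology [simp]: "topspace (quotient_topology X q) = q ` topspace X"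
proof -
  have "{x \<in> topspace X. q x \<in> q ` topspace X} = topspace X"
    by auto
  then have "openin (quotient_topology X q) (q ` topspace X)"
    by (simp add: openin_quotient_topology)
  then show ?thesis
    by (auto simp: topspace_def openin_quotient_topology)
qed

lemma quotient_map_quotient_topology: "quotient_map X (quotient_topology X q) q"
  by (simp add: quotient_map_def openin_quotient_topology)

lemma closed_map_quotient_topology:
  assumes "\<And>C. closedin X C \<Longrightarrow> closedin X {x \<in> topspace X. q x \<in> q ` C}"
  shows "closed_map X (quotient_topology X q) q"
proof -
  have "closedin (quotient_topology X q) (q ` C)" if "closedin X C" for C
    using quotient_map_quotient_topology[of X q] assms[OF that] closedin_subset[OF that]
    unfolding quotient_map_closedin by (simp add: image_mono)
  then show ?thesis
    by (simp add: closed_map_def)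
qed

lemma Tietze_extension_through_closed_map:
  assumes "normal_space X" and q: "continuous_map X Z q" "closed_map X Z q" "q ` topspace X = topspace Z"
    and S: "closedin X S" "inj_on q S"
    and f: "continuous_map (subtopology X S) euclideanreal f"
  obtains g where "continuous_map Z euclideanreal g" "\<And>x. x \<in> S \<Longrightarrow> g (q x) = f x"
proof -
  have "normal_space Z"
    using normal_space_continuous_closed_map_image assms by blast
  have qS: "closedin Z (q ` S)"
    using q(2) S(1) by (simp add: closed_map_def)
  have topS: "topspace (subtopology X S) = S"
    using closedin_subset[OF S(1)] by auto
  have "homeomorphic_map (subtopology X S) (subtopology Z (q ` S)) q"
  proof (rule bijective_closed_imp_homeomorphic_map)
    show "continuous_map (subtopology X S) (subtopology Z (q ` S)) q"
      using q(1) topS by (auto simp: continuous_map_in_subtopology continuous_map_from_subtopology)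
    show "closed_map (subtopology X S) (subtopology Z (q ` S)) q"
      using q(2) S(1) topS
      by (auto intro: closed_map_into_subtopology closed_map_from_subtopology)
    show "q ` topspace (subtopology X S) = topspace (subtopology Z (q ` S))"
      using closedin_subset[OF qS] topS by auto
    show "inj_on q (topspace (subtopology X S))"
      using S(2) topS by simp
  qed
  then obtain r where r: "homeomorphic_maps (subtopology X S) (subtopology Z (q ` S)) q r"
    using homeomorphic_map_maps by blast
  then have "continuous_map (subtopology Z (q ` S)) euclideanreal (f \<circ> r)"
    using f continuous_map_compose homeomorphic_maps_def by blast
  then obtain g where g: "continuous_map Z euclideanreal g" "\<And>z. z \<in> q ` S \<Longrightarrow> g z = (f \<circ> r) z"
    using Tietze_extension_realinterval[OF \<open>normal_space Z\<close> qS, of UNIV "f \<circ> r"] by auto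
  have "g (q x) = f x" if "x \<in> S" for x
    using g(2) r that topS by (simp add: homeomorphic_maps_def)
  with g(1) show thesis
    using that by blast
qed

definition fibre_class :: "'a topology \<Rightarrow> ('a \<Rightarrow> 'b) \<Rightarrow> 'b \<Rightarrow> 'a \<Rightarrow> 'a set" where
  "fibre_class X \<pi> y x = (if \<pi> x = y then {x} else {z \<in> topspace X. \<pi> z = \<pi> x})"

lemma fibre_class_eq_iff:
  assumes "x1 \<in> topspace X" "x2 \<in> topspace X"
  shows "fibre_class X \<pi> y x1 = fibre_class X \<pi> y x2 \<longleftrightarrow> \<pi> x1 = \<pi> x2 \<and> (\<pi> x1 = y \<longrightarrow> x1 = x2)"
proof
  assume eq: "fibre_class X \<pi> y x1 = fibre_class X \<pi> y x2"
  have "x \<in> fibre_class X \<pi> y x" if "x \<in> topspace X" for x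
    using that by (simp add: fibre_class_def)
  then have "x1 \<in> fibre_class X \<pi> y x2" "x2 \<in> fibre_class X \<pi> y x1"
    using assms eq by blast+
  then show "\<pi> x1 = \<pi> x2 \<and> (\<pi> x1 = y \<longrightarrow> x1 = x2)"
    unfolding fibre_class_def by (metis (mono_tags) mem_Collect_eq singletonD)
next
  assume "\<pi> x1 = \<pi> x2 \<and> (\<pi> x1 = y \<longrightarrow> x1 = x2)"
  then show "fibre_class X \<pi> y x1 = fibre_class X \<pi> y x2"
    unfolding fibre_class_def by metis
qed

lemma inj_on_fibre_class: "inj_on (fibre_class X \<pi> y) {x \<in> topspace X. \<pi> x = y}"
  by (rule inj_onI) (simp add: fibre_class_eq_iff)

lemma fibre_class_saturation:
  assumes "C \<subseteq> topspace X"
  shows "{x \<in> topspace X. fibre_class X \<pi> y x \<in> fibre_class X \<pi> y ` C} =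
           C \<union> {x \<in> topspace X. \<pi> x \<in> \<pi> ` C - {y}}"
proof -
  have "fibre_class X \<pi> y x \<in> fibre_class X \<pi> y ` C \<longleftrightarrow> x \<in> C \<or> \<pi> x \<in> \<pi> ` C - {y}"
    if x: "x \<in> topspace X" for x
  proof
    assume "fibre_class X \<pi> y x \<in> fibre_class X \<pi> y ` C"
    then obtain c where c: "c \<in> C" "fibre_class X \<pi> y x = fibre_class X \<pi> y c"
      by blast
    moreover have "c \<in> topspace X"
      using assms c(1) by blast
    ultimately have "\<pi> x = \<pi> c \<and> (\<pi> x = y \<longrightarrow> x = c)"
      using fibre_class_eq_iff[OF x] by metis
    then show "x \<in> C \<or> \<pi> x \<in> \<pi> ` C - {y}"
      using c(1) by blast
  next
    assume "x \<in> C \<or> \<pi> x \<in> \<pi> ` C - {y}"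
    then obtain c where c: "c \<in> C" "\<pi> x = \<pi> c \<and> (\<pi> x = y \<longrightarrow> x = c)"
      by blast
    moreover have "c \<in> topspace X"
      using assms c(1) by blast
    ultimately have "fibre_class X \<pi> y x = fibre_class X \<pi> y c"
      using fibre_class_eq_iff[OF x] by metis
    then show "fibre_class X \<pi> y x \<in> fibre_class X \<pi> y ` C"
      using c(1) by blast
  qed
  then show ?thesis
    using assms by blast
qed

lemma fully_closed_closedin_saturation:
  assumes \<pi>: "fully_closed X Y \<pi>" "closed_map X Y \<pi>"
    and "regular_space X" "t1_space Y" and C: "closedin X C"
  shows "closedin X (C \<union> {x \<in> topspace X. \<pi> x \<in> \<pi> ` C - {y}})" (is "closedin X ?S")
proof -
  have cont: "continuous_map X Y \<pi>"
    using \<pi>(1) by (simp add: fully_closed_def)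
  have "\<exists>T. openin X T \<and> x \<in> T \<and> T \<subseteq> topspace X - ?S" if x: "x \<in> topspace X - ?S" for x
  proof (cases "\<pi> x \<in> \<pi> ` C")
    case False
    define T where "T = {z \<in> topspace X. \<pi> z \<in> topspace Y - \<pi> ` C}"
    have "closedin Y (\<pi> ` C)"
      using \<pi>(2) C by (simp add: closed_map_def)
    then have "openin X T"
      unfolding T_def by (intro openin_continuous_map_preimage[OF cont]) blast
    moreover have "x \<in> T"
      using False x cont by (auto simp: T_def continuous_map_def)
    moreover have "T \<subseteq> topspace X - ?S"
      by (auto simp: T_def)
    ultimately show ?thesis
      by blast
  next
    case True
    with x have "\<pi> x = y" "x \<notin> C"
      by auto
    then obtain U where U: "openin X U" "x \<in> U" "disjnt C (X closure_of U)"
      using \<open>regular_space X\<close> C x unfolding regular_space by blast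
    define K where "K = X closure_of U"
    define Q where "Q = \<pi> ` K \<inter> \<pi> ` C - {y}"
    define T where "T = U - {z \<in> topspace X. \<pi> z \<in> Q}"
    have "K \<inter> C = {}" "U \<subseteq> K"
      using U by (auto simp: K_def disjnt_def closure_of_subset openin_subset)
    then have "finite Q"
      using \<pi>(1) C by (simp add: Q_def K_def fully_closed_def)
    moreover have "Q \<subseteq> topspace Y"
      using cont closedin_subset[OF C] by (auto simp: Q_def continuous_map_def)
    ultimately have "closedin Y Q"
      using \<open>t1_space Y\<close> by (simp add: t1_space_closedin_finite)
    then have "openin X T"
      unfolding T_def using U(1) by (intro openin_diff closedin_continuous_map_preimage[OF cont])
    moreover have "x \<in> T"
      using U(2) \<open>\<pi> x = y\<close> by (simp add: T_def Q_def)
    moreover have "T \<subseteq> topspace X - ?S"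
      using \<open>K \<inter> C = {}\<close> \<open>U \<subseteq> K\<close> openin_subset[OF U(1)] by (auto simp: T_def Q_def)
    ultimately show ?thesis
      by blast
  qed
  then have "openin X (topspace X - ?S)"
    by (subst openin_subopen) blast
  moreover have "?S \<subseteq> topspace X"
    using closedin_subset[OF C] by auto
  ultimately show ?thesis
    by (simp add: closedin_def)
qed

lemma closed_map_fibre_class:
  assumes "fully_closed X Y \<pi>" "closed_map X Y \<pi>" "regular_space X" "t1_space Y"
  shows "closed_map X (quotient_topology X (fibre_class X \<pi> y)) (fibre_class X \<pi> y)"
proof (rule closed_map_quotient_topology)
  fix C
  assume C: "closedin X C"
  then show "closedin X {x \<in> topspace X. fibre_class X \<pi> y x \<in> fibre_class X \<pi> y ` C}"
    using fully_closed_closedin_saturation[OF assms C]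
    by (simp add: fibre_class_saturation[OF closedin_subset[OF C]])
qed

theorem lemma4p2:
  fixes X :: "'a topology" and Y :: "'b topology" and \<pi> :: "'a \<Rightarrow> 'b"
    and y :: 'b and f :: "'a \<Rightarrow> real"
  assumes "compact_space X" and "Hausdorff_space X"
    and "compact_space Y" and "Hausdorff_space Y"
    and "fully_closed X Y \<pi>"
    and "y \<in> topspace Y"
    and "continuous_map (subtopology X {x \<in> topspace X. \<pi> x = y}) euclideanreal f"
  shows "\<exists>g. continuous_map X euclideanreal g \<and>
             (\<forall>x \<in> topspace X. \<pi> x = y \<longrightarrow> g x = f x) \<and>
             (\<forall>y' \<in> topspace Y. y' \<noteq> y \<longrightarrow>
                (\<forall>x1 \<in> topspace X. \<forall>x2 \<in> topspace X.
                   \<pi> x1 = y' \<longrightarrow> \<pi> x2 = y' \<longrightarrow> g x1 = g x2))"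
proof -
  let ?q = "fibre_class X \<pi> y"
  have cont: "continuous_map X Y \<pi>"
    using assms(5) by (simp add: fully_closed_def)
  have "closed_map X (quotient_topology X ?q) ?q"
    using closed_map_fibre_class[OF assms(5) continuous_imp_closed_map[OF cont assms(1,4)]
        compact_Hausdorff_imp_regular_space[OF assms(1,2)] Hausdorff_imp_t1_space[OF assms(4)]] .
  moreover have "closedin X {x \<in> topspace X. \<pi> x = y}"
    using closedin_continuous_map_preimage[OF cont closedin_t1_singleton[OF Hausdorff_imp_t1_space]]
      assms(4,6) by simp
  ultimately obtain g where g: "continuous_map (quotient_topology X ?q) euclideanreal g"
    and gf: "\<And>x. x \<in> {x \<in> topspace X. \<pi> x = y} \<Longrightarrow> g (?q x) = f x"
    using Tietze_extension_through_closed_map[OF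
        compact_Hausdorff_or_regular_imp_normal_space[OF assms(1) disjI1[OF assms(2)]]
        quotient_imp_continuous_map[OF quotient_map_quotient_topology] _
        topspace_quotient_topology[symmetric] _ inj_on_fibre_class assms(7)]
    by blast
  show ?thesis
  proof (intro exI conjI ballI impI)
    show "continuous_map X euclideanreal (g \<circ> ?q)"
      using quotient_imp_continuous_map[OF quotient_map_quotient_topology] g
      by (rule continuous_map_compose)
    show "(g \<circ> ?q) x = f x" if "x \<in> topspace X" "\<pi> x = y" for x
      using gf that by simp
    show "(g \<circ> ?q) x1 = (g \<circ> ?q) x2"
      if "y' \<noteq> y" "x1 \<in> topspace X" "x2 \<in> topspace X" "\<pi> x1 = y'" "\<pi> x2 = y'" for y' x1 x2
      using that fibre_class_eq_iff[OF that(2,3), of \<pi> y] by simp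
  qed
qed

end
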